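(* Let $\alpha,\beta,\gamma>0$ with $\gamma<1/5$, $\delta<1/2$, and $x_0,y\in\mathcal D(\delta)$ with $\|x_0-y\|\le\frac45r_\delta$ lying on different sides of a barrier $B_i$, $i\ge1$. Let $X$ be the snapping-out Brownian motion with $X_0=x_0$ (driven by $W$ and $s_1,\dots,s_m$), and suppose the event $$\mathcal A:=\Big\{\mathcal E_1<\alpha r_\delta,\ \mathcal E_2>\beta r_\delta,\ \|W_t-(t/r_\delta^2)(y-x_0)\|\le\gamma r_\delta\ \forall t\le r_\delta^2\Big\}$$ occurs. Then for every $t\le r_\delta^2$ with $L^{(i)}_t<(1/5-\gamma)r_\delta$ one has $X_t\in\mathsf B(x_0,r_\delta)$.
   Context: Setting. $D\subseteq\mathbb R^2$ is the closure of a bounded open set $D_0$; $D$ is connected and simply connected, with $C^\infty$ boundary $B_0:=\partial D$, a simple closed curve. $B_1,\dots,B_m\subseteq D_0$ are $C^\infty$ simple closed curves with $B_i\cap B_j=\emptyset$ for $i\neq j$ ($0\le i,j\le m$). For each $i$, the positive side of $B_i$ is the closure of the bounded component of $\mathbb R^2\setminus B_i$, the negative side the closure of the unbounded component (points of $B_i$ lie on both sides); $\vec n_i$ is the unit normal field on $B_i$ pointing into the bounded component. Fix $\lambda_i^\pm>0$. Let $W_t$ be a standard planar Wiener process and, independently, $s_1,\dots,s_m$ independent càdlàg Markov chains on $\{-1,+1\}$, $s_i$ jumping from $-1$ to $+1$ at rate $\lambda_i^+$ and from $+1$ to $-1$ at rate $\lambda_i^-$; $s_0\equiv+1$. A snapping-out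 Brownian motion is a family of continuous processes $X_t\in D$, $L^{(i)}_t\ge0$ such that a.s.: (i) $dX_t=dW_t+\sum_{i=0}^m s_i(L^{(i)}_t)\vec n_i(X_t)\mathbf 1\{X_t\in B_i\}dL^{(i)}_t$; (ii) $L^{(i)}$ nondecreasing, $L^{(i)}_0=0$, $L^{(i)}_t=\int_0^t\mathbf 1\{X_r\in B_i\}dL^{(i)}_r$; (iii) $s_i(L^{(i)}_t)=+1$ (resp. $-1$) implies $X_t$ is on the positive (resp. negative) side of $B_i$. Here $s_i(0)$ is $+1$ if $x_0$ is on the positive side of $B_i$ and $-1$ otherwise. Parameters: $\lambda_{\max}=\max\lambda_j^\pm$; $\kappa$ maximal unsigned curvature of $B_0,\dots,B_m$; $\rho:=\sup\{r\ge0:\mathsf B(x,r')\cap\bigcup_jB_j\text{ connected }\forall r'\le r,\ x\in D\}$ ($\mathsf B$ = open ball); $r_\delta:=\delta\min\{1/\kappa,1/\lambda_{\max},\rho\}$; $\mathcal D(\delta):=\{x\in D:\|x-z\|\ge r_\delta/5\ \forall z\in\bigcup_jB_j\}$. Also $\mathcal E_1:=\inf\{t\ge0:s_i(t)\ne s_i(0)\}$ and $\mathcal E_2:=\inf\{t\ge\mathcal E_1:s_i(t)\ne s_i(\mathcal E_1)\}-\mathcal E_1$. *)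

theory Defs
  imports "HOL-Analysis.Analysis"
begin

text \<open>Points of the plane R^2 are represented as complex numbers.\<close>

definition smooth_closed_param :: "(real \<Rightarrow> complex) \<Rightarrow> bool" where
  "smooth_closed_param g \<longleftrightarrow>
     (\<exists>d :: nat \<Rightarrow> real \<Rightarrow> complex. d 0 = g \<and>
        (\<forall>n t. (d n has_vector_derivative d (Suc n) t) (at t))) \<and>
     (\<forall>t. g (t + 1) = g t) \<and> inj_on g {0..<1} \<and>
     (\<forall>t. vector_derivative g (at t) \<noteq> 0)"

definition param_of :: "(real \<Rightarrow> complex) \<Rightarrow> complex set \<Rightarrow> bool" where
  "param_of g B \<longleftrightarrow> smooth_closed_param g \<and> B = g ` {0..1}"

definition smooth_simple_closed_curve :: "complex set \<Rightarrow> bool" where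
  "smooth_simple_closed_curve B \<longleftrightarrow> (\<exists>g. param_of g B)"

definition pos_side :: "complex set \<Rightarrow> complex set" where
  "pos_side B = closure (inside B)"

definition neg_side :: "complex set \<Rightarrow> complex set" where
  "neg_side B = closure (outside B)"

definition curv :: "(real \<Rightarrow> complex) \<Rightarrow> real \<Rightarrow> real" where
  "curv g t = (let g1 = vector_derivative g (at t);
                   g2 = vector_derivative (\<lambda>u. vector_derivative g (at u)) (at t)
               in \<bar>Im (cnj g1 * g2)\<bar> / norm g1 ^ 3)"

definition max_curvature :: "(nat \<Rightarrow> complex set) \<Rightarrow> nat \<Rightarrow> real" where
  "max_curvature B m = Sup {curv g t | i g t. i \<le> m \<and> param_of g (B i)}"

definition inward_normal :: "complex set \<Rightarrow> complex \<Rightarrow> complex" where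
  "inward_normal B x = (THE v. norm v = 1 \<and>
      (\<exists>g t. param_of g B \<and> g t = x \<and> Re (cnj v * vector_derivative g (at t)) = 0) \<and>
      (\<forall>\<^sub>F e in at_right 0. x + of_real e * v \<in> inside B))"

definition lambda_max :: "(nat \<Rightarrow> real) \<Rightarrow> (nat \<Rightarrow> real) \<Rightarrow> nat \<Rightarrow> real" where
  "lambda_max lp lm m = Max ((\<lambda>i. max (lp i) (lm i)) ` {1..m})"

definition rho :: "complex set \<Rightarrow> (nat \<Rightarrow> complex set) \<Rightarrow> nat \<Rightarrow> real" where
  "rho D B m = Sup {r. r \<ge> 0 \<and> (\<forall>r'\<le>r. \<forall>x\<in>D. connected (ball x r' \<inter> (\<Union>j\<le>m. B j)))}"

definition r_delta :: "real \<Rightarrow> complex set \<Rightarrow> (nat \<Rightarrow> complex set) \<Rightarrow> nat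
                       \<Rightarrow> (nat \<Rightarrow> real) \<Rightarrow> (nat \<Rightarrow> real) \<Rightarrow> real" where
  "r_delta \<delta> D B m lp lm =
     \<delta> * min (min (1 / max_curvature B m) (1 / lambda_max lp lm m)) (rho D B m)"

definition calD :: "real \<Rightarrow> complex set \<Rightarrow> (nat \<Rightarrow> complex set) \<Rightarrow> nat
                    \<Rightarrow> (nat \<Rightarrow> real) \<Rightarrow> (nat \<Rightarrow> real) \<Rightarrow> complex set" where
  "calD \<delta> D B m lp lm = {x \<in> D. \<forall>z \<in> (\<Union>j\<le>m. B j). dist x z \<ge> r_delta \<delta> D B m lp lm / 5}"

definition LS_integral :: "(real \<Rightarrow> real) \<Rightarrow> (real \<Rightarrow> 'a::{banach,second_countable_topology}) \<Rightarrow> real \<Rightarrow> 'a" where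
  "LS_integral F f t =
     integral\<^sup>L (interval_measure (\<lambda>u. F (max 0 u))) (\<lambda>r. indicator {0<..t} r *\<^sub>R f r)"

definition cadlag_on_nonneg :: "(real \<Rightarrow> real) \<Rightarrow> bool" where
  "cadlag_on_nonneg f \<longleftrightarrow> (\<forall>t\<ge>0. continuous (at_right t) f) \<and>
                           (\<forall>t>0. \<exists>l. (f \<longlongrightarrow> l) (at_left t))"

text \<open>First jump time and the subsequent holding time (values in the extended reals;
  the infimum of the empty set is +oo).\<close>
definition E1 :: "(real \<Rightarrow> real) \<Rightarrow> ereal" where
  "E1 s = Inf (ereal ` {t. t \<ge> 0 \<and> s t \<noteq> s 0})"

definition E2 :: "(real \<Rightarrow> real) \<Rightarrow> ereal" where
  "E2 s = Inf (ereal ` {t. ereal t \<ge> E1 s \<and> s t \<noteq> s (real_of_ereal (E1 s))}) - E1 s"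

end

(* Let tau be the first time X leaves the open ball of radius r around x0; up to tau, X stays
   in the closed ball.  The barrier B_i separates x0 from y, so it meets the segment [x0, y]
   within distance r of x0; by the definition of rho the barriers meet a slightly larger ball
   in a connected set, so no other barrier meets the closed ball.  Hence up to tau only B_i
   contributes to the reflection term, whose norm is at most L^(i)_tau because the inward
   normal is a unit vector.  On the event A, |W_tau| <= gamma r + 4r/5, so |X_tau - x0| < r
   as long as L^(i) < (1/5 - gamma) r, contradicting the choice of tau.

   That the inward normal is a unit vector is the geometric core: near each of its points a
   smooth Jordan curve is a graph over its tangent line and lies in arbitrarily flat cones
   around it, so the two normal half-rays lie in different complementary components and
   exactly one of them points into the inside. *)

theory Submission
  imports Defs
begin

section \<open>Smooth closed parametrised curves\<close>

lemma param_ofE: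
  assumes "param_of g B"
  obtains d where "d 0 = g" "\<And>n t. (d n has_vector_derivative d (Suc n) t) (at t)"
    and "\<And>t. g (t + 1) = g t" and "inj_on g {0..<1}"
    and "\<And>t. vector_derivative g (at t) \<noteq> 0" and "B = g ` {0..1}"
  using assms unfolding param_of_def smooth_closed_param_def by blast

lemma param_has_vector_derivative:
  assumes "param_of g B"
  shows "(g has_vector_derivative vector_derivative g (at t)) (at t)"
  using assms by (elim param_ofE) (metis vector_derivative_works differentiableI_vector)

lemma param_isCont_derivative:
  assumes "param_of g B"
  shows "isCont (\<lambda>t. vector_derivative g (at t)) t"
proof -
  obtain d where d: "d 0 = g" "\<And>n t. (d n has_vector_derivative d (Suc n) t) (at t)"
    using param_ofE[OF assms] by metis
  have "vector_derivative g (at t) = d 1 t" for t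
    using d(2)[of 0 t] d(1) by (simp add: vector_derivative_at)
  then have "(\<lambda>t. vector_derivative g (at t)) = d 1" by blast
  then show ?thesis using has_vector_derivative_continuous[OF d(2)] by simp
qed

lemma param_derivative_nonzero: "param_of g B \<Longrightarrow> vector_derivative g (at t) \<noteq> 0"
  by (elim param_ofE) auto

lemma param_continuous_on: "param_of g B \<Longrightarrow> continuous_on S g"
  by (metis continuous_at_imp_continuous_on has_vector_derivative_continuous
      param_has_vector_derivative)

lemma param_periodic_int:
  assumes "param_of g B"
  shows "g (t + of_int k) = g t"
proof -
  have per: "g (t + 1) = g t" for t using assms by (elim param_ofE)
  have nat: "g (t + of_nat n) = g t" for t n
    by (induction n) (simp_all add: per[of "t + of_nat _", symmetric] algebra_simps)
  show ?thesis
  proof (cases "k \<ge> 0")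
    case True
    then show ?thesis using nat[of t "nat k"] by simp
  next
    case False
    then show ?thesis using nat[of "t + of_int k" "nat (- k)"] by simp
  qed
qed

lemma param_eq_frac: "param_of g B \<Longrightarrow> g t = g (frac t)"
  using param_periodic_int[of g B "frac t" "\<lfloor>t\<rfloor>"] by (simp add: frac_def)

lemma param_image:
  assumes "param_of g B"
  shows "B = range g"
proof -
  have B: "B = g ` {0..1}" using assms by (elim param_ofE)
  have "g t \<in> g ` {0..1}" for t
    using param_eq_frac[OF assms, of t] frac_ge_0[of t] frac_lt_1[of t] by fastforce
  then show ?thesis unfolding B by blast
qed

lemma param_closed:
  assumes "param_of g B"
  shows "closed B"
proof -
  have "B = g ` {0..1}" using assms by (elim param_ofE)
  then show ?thesis
    using compact_continuous_image[OF param_continuous_on[OF assms] compact_Icc] compact_imp_closed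
    by metis
qed

lemma param_eq_imp_diff_Ints:
  assumes "param_of g B" "g t1 = g t2"
  shows "t1 - t2 \<in> \<int>"
proof -
  have "inj_on g {0..<1}" using assms(1) by (elim param_ofE)
  moreover have "g (frac t1) = g (frac t2)" using assms param_eq_frac by metis
  ultimately have "frac t1 = frac t2"
    by (meson atLeastLessThan_iff frac_ge_0 frac_lt_1 inj_onD)
  then have "t1 - t2 = of_int (\<lfloor>t1\<rfloor> - \<lfloor>t2\<rfloor>)" by (simp add: frac_def)
  then show ?thesis by (metis Ints_of_int)
qed

lemma param_simple_loop:
  assumes "param_of g B"
  shows "simple_path g" "pathfinish g = pathstart g" "path_image g = B"
proof -
  obtain B: "B = g ` {0..1}" and per: "g (0 + 1) = g 0"
    using param_ofE[OF assms] by metis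
  show "path_image g = B" unfolding path_image_def B ..
  show "pathfinish g = pathstart g" unfolding pathfinish_def pathstart_def using per by simp
  have "a = b \<or> a = 0 \<and> b = 1 \<or> a = 1 \<and> b = 0"
    if ab: "a \<in> {0..1}" "b \<in> {0..1}" "g a = g b" for a b
  proof -
    obtain k where k: "a - b = of_int k"
      using param_eq_imp_diff_Ints[OF assms ab(3)] by (auto elim: Ints_cases)
    then have "k \<in> {-1, 0, 1}" using ab by auto
    then show ?thesis using ab k by auto
  qed
  then show "simple_path g"
    unfolding simple_path_def path_def loop_free_def using param_continuous_on[OF assms] by blast
qed

lemma param_frontier_inside_outside:
  assumes "param_of g B"
  shows "frontier (inside B) = B" "frontier (outside B) = B"
  using Jordan_inside_outside[OF param_simple_loop(1,2)[OF assms]]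
  unfolding param_simple_loop(3)[OF assms] by auto

text \<open>The rest of one period around t0 has a compact image avoiding g t0.\<close>
lemma param_near_point:
  assumes par: "param_of g B" and \<delta>: "0 < \<delta>" "\<delta> \<le> 1/2"
  obtains \<rho> where "\<rho> > 0" "\<And>p. p \<in> B \<Longrightarrow> dist p (g t0) < \<rho> \<Longrightarrow> \<exists>s. \<bar>s - t0\<bar> < \<delta> \<and> p = g s"
proof -
  define I where "I = {t0 - 1/2 .. t0 + 1/2} - {t0 - \<delta> <..< t0 + \<delta>}"
  have "compact (g ` I)"
    unfolding I_def
    by (intro compact_continuous_image param_continuous_on[OF par] compact_diff) auto
  moreover have "g t0 \<notin> g ` I"
  proof
    assume "g t0 \<in> g ` I"
    then obtain s where s: "s \<in> I" "g s = g t0" by auto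
    then obtain k where k: "s - t0 = of_int k"
      using param_eq_imp_diff_Ints[OF par] by (metis Ints_cases)
    then have "\<bar>of_int k :: real\<bar> \<le> 1/2" using s(1) by (auto simp: I_def)
    then have "k = 0" by linarith
    then show False using s(1) k \<delta> by (auto simp: I_def)
  qed
  ultimately obtain \<rho> where \<rho>: "\<rho> > 0" "\<And>q. q \<in> g ` I \<Longrightarrow> \<rho> \<le> dist (g t0) q"
    using separate_point_closed compact_imp_closed by metis
  have "\<exists>s. \<bar>s - t0\<bar> < \<delta> \<and> p = g s" if p: "p \<in> B" "dist p (g t0) < \<rho>" for p
  proof -
    obtain s' where s': "p = g s'" using p param_image[OF par] by auto
    define s where "s = s' - of_int \<lfloor>s' - t0 + 1/2\<rfloor>"
    have "g s = p"
      unfolding s_def using param_periodic_int[OF par] s'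
      by (metis diff_conv_add_uminus of_int_minus)
    moreover have "t0 - 1/2 \<le> s" "s \<le> t0 + 1/2" unfolding s_def
      using of_int_floor_le[of "s' - t0 + 1/2"] real_of_int_floor_add_one_gt[of "s' - t0 + 1/2"]
      by linarith+
    moreover have "p \<notin> g ` I" using \<rho>(2) p(2) by (fastforce simp: dist_commute)
    ultimately have "s \<in> {t0 - \<delta> <..< t0 + \<delta>}" unfolding I_def by force
    then show ?thesis using \<open>g s = p\<close> by (metis abs_diff_less_iff greaterThanLessThan_iff)
  qed
  with \<rho>(1) show ?thesis using that by blast
qed

section \<open>Local geometry at a point of a smooth curve\<close>

text \<open>For \<open>norm u = 1\<close>, \<open>cnj u * (p - x)\<close> are the coordinates of p in the orthonormal frame
  at x whose first axis is u.\<close>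
definition cone_near :: "complex set \<Rightarrow> complex \<Rightarrow> complex \<Rightarrow> real \<Rightarrow> real \<Rightarrow> bool" where
  "cone_near B x u \<eta> \<rho> \<longleftrightarrow>
     (\<forall>p\<in>B. dist p x < \<rho> \<longrightarrow> \<bar>Im (cnj u * (p - x))\<bar> \<le> \<eta> * \<bar>Re (cnj u * (p - x))\<bar>)"

definition graph_near :: "complex set \<Rightarrow> complex \<Rightarrow> complex \<Rightarrow> real \<Rightarrow> bool" where
  "graph_near B x u \<rho> \<longleftrightarrow>
     (\<forall>p\<in>B. \<forall>q\<in>B. dist p x < \<rho> \<longrightarrow> dist q x < \<rho> \<longrightarrow>
        Re (cnj u * (p - x)) = Re (cnj u * (q - x)) \<longrightarrow> p = q)"

lemma cnj_sgn_mult_self: "cnj (sgn z) * z = of_real (norm z)"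
proof (cases "z = 0")
  case False
  have "cnj z * z = of_real (norm z ^ 2)" by (metis complex_norm_square mult.commute of_real_power)
  then show ?thesis
    using False by (simp add: sgn_div_norm scaleR_conv_of_real power2_eq_square mult.assoc)
qed simp

lemma Re_less_of_derivative_in_cone:
  fixes G G' :: "real \<Rightarrow> complex"
  assumes G: "\<And>s. a \<le> s \<Longrightarrow> s \<le> b \<Longrightarrow> (G has_vector_derivative G' s) (at s)"
    and cone: "\<And>s. a \<le> s \<Longrightarrow> s \<le> b \<Longrightarrow> \<bar>Im (G' s)\<bar> < \<eta> * Re (G' s)" and "0 < \<eta>"
    and s: "a \<le> s1" "s1 < s2" "s2 \<le> b"
  shows "Re (G s1) < Re (G s2)"
proof (rule DERIV_pos_imp_increasing[OF s(2)])
  fix s assume "s1 \<le> s" "s \<le> s2"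
  then have "0 < Re (G' s)" using cone[of s] s \<open>0 < \<eta>\<close> by (smt (verit) zero_less_mult_iff)
  then show "\<exists>y. ((\<lambda>s. Re (G s)) has_real_derivative y) (at s) \<and> y > 0"
    using has_field_derivative_Re[OF G] \<open>s1 \<le> s\<close> \<open>s \<le> s2\<close> s by (meson order_trans less_imp_le)
qed

text \<open>Both \<open>\<eta> * Re G \<pm> Im G\<close> are nondecreasing and vanish at c.\<close>
lemma in_cone_of_derivative_in_cone:
  fixes G G' :: "real \<Rightarrow> complex"
  assumes G: "\<And>s. a \<le> s \<Longrightarrow> s \<le> b \<Longrightarrow> (G has_vector_derivative G' s) (at s)"
    and cone: "\<And>s. a \<le> s \<Longrightarrow> s \<le> b \<Longrightarrow> \<bar>Im (G' s)\<bar> < \<eta> * Re (G' s)" and "0 < \<eta>"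
    and "G c = 0" "a \<le> c" "c \<le> b" "a \<le> s" "s \<le> b"
  shows "\<bar>Im (G s)\<bar> \<le> \<eta> * \<bar>Re (G s)\<bar>"
proof -
  have mono: "\<eta> * Re (G s1) + \<sigma> * Im (G s1) \<le> \<eta> * Re (G s2) + \<sigma> * Im (G s2)"
    if "\<sigma> \<in> {1, -1}" "a \<le> s1" "s1 \<le> s2" "s2 \<le> b" for \<sigma> s1 s2
  proof (rule DERIV_nonneg_imp_nondecreasing[OF that(3)])
    fix v assume v: "s1 \<le> v" "v \<le> s2"
    have "((\<lambda>s. \<eta> * Re (G s) + \<sigma> * Im (G s)) has_real_derivative
        \<eta> * Re (G' v) + \<sigma> * Im (G' v)) (at v)"
      using v that
      by (intro DERIV_add DERIV_cmult has_field_derivative_Re has_field_derivative_Im G) auto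
    moreover have "0 \<le> \<eta> * Re (G' v) + \<sigma> * Im (G' v)" using cone[of v] v that by auto
    ultimately show "\<exists>y. ((\<lambda>s. \<eta> * Re (G s) + \<sigma> * Im (G s)) has_real_derivative y) (at v) \<and> y \<ge> 0"
      by blast
  qed
  show ?thesis
  proof (cases "c \<le> s")
    case True
    from mono[of 1 c s] mono[of "-1" c s] have "\<bar>Im (G s)\<bar> \<le> \<eta> * Re (G s)" "0 \<le> \<eta> * Re (G s)"
      using True assms(4-8) by auto
    then show ?thesis using \<open>0 < \<eta>\<close> by (simp add: zero_le_mult_iff)
  next
    case False
    from mono[of 1 s c] mono[of "-1" s c] have "\<bar>Im (G s)\<bar> \<le> - (\<eta> * Re (G s))" "\<eta> * Re (G s) \<le> 0"
      using False assms(4-8) by auto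
    then show ?thesis using \<open>0 < \<eta>\<close> by (simp add: mult_le_0_iff)
  qed
qed

lemma param_derivative_in_cone_near:
  fixes t0 :: real
  assumes par: "param_of g B" and "0 < \<eta>"
  defines "u \<equiv> sgn (vector_derivative g (at t0))"
  obtains \<delta> where "0 < \<delta>" "\<delta> \<le> 1/2"
    "\<And>s. t0 - \<delta> \<le> s \<Longrightarrow> s \<le> t0 + \<delta> \<Longrightarrow>
       \<bar>Im (cnj u * vector_derivative g (at s))\<bar> < \<eta> * Re (cnj u * vector_derivative g (at s))"
proof -
  define w where "w s = cnj u * vector_derivative g (at s)" for s
  define K where "K = {z. \<bar>Im z\<bar> < \<eta> * Re z}"
  have "open K" unfolding K_def by (intro open_Collect_less continuous_intros)
  moreover have "w t0 \<in> K"
    using param_derivative_nonzero[OF par] \<open>0 < \<eta>\<close>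
    by (simp add: K_def w_def u_def cnj_sgn_mult_self)
  moreover have "isCont w t0"
    unfolding w_def using param_isCont_derivative[OF par] by (intro continuous_intros)
  ultimately obtain S where S: "open S" "t0 \<in> S" "\<And>s. s \<in> S \<Longrightarrow> w s \<in> K"
    using continuous_at_open by metis
  then obtain d where "d > 0" "ball t0 d \<subseteq> S" using open_contains_ball by blast
  show ?thesis
  proof (rule that[of "min (d/2) (1/2)"])
    fix s assume "t0 - min (d/2) (1/2) \<le> s" "s \<le> t0 + min (d/2) (1/2)"
    then have "s \<in> ball t0 d" using \<open>d > 0\<close> by (auto simp: dist_real_def)
    then show
      "\<bar>Im (cnj u * vector_derivative g (at s))\<bar> < \<eta> * Re (cnj u * vector_derivative g (at s))"
      using S(3) \<open>ball t0 d \<subseteq> S\<close> by (auto simp: K_def w_def)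
  qed (use \<open>d > 0\<close> in auto)
qed

lemma param_cone_graph_near:
  fixes t0 :: real
  assumes par: "param_of g B" and "0 < \<eta>"
  defines "u \<equiv> sgn (vector_derivative g (at t0))"
  obtains \<rho> where "\<rho> > 0" "cone_near B (g t0) u \<eta> \<rho>" "graph_near B (g t0) u \<rho>"
proof -
  define G where "G s = cnj u * (g s - g t0)" for s
  define G' where "G' s = cnj u * vector_derivative g (at s)" for s
  have G: "(G has_vector_derivative G' s) (at s)" for s
    unfolding G_def G'_def using param_has_vector_derivative[OF par]
    by (auto intro!: derivative_eq_intros)
  obtain \<delta> where \<delta>: "0 < \<delta>" "\<delta> \<le> 1/2"
    and cone: "\<And>s. t0 - \<delta> \<le> s \<Longrightarrow> s \<le> t0 + \<delta> \<Longrightarrow> \<bar>Im (G' s)\<bar> < \<eta> * Re (G' s)"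
    using param_derivative_in_cone_near[OF par \<open>0 < \<eta>\<close>] unfolding G'_def u_def by metis
  obtain \<rho> where "\<rho> > 0" and near: "\<And>p. p \<in> B \<Longrightarrow> dist p (g t0) < \<rho> \<Longrightarrow> \<exists>s. \<bar>s - t0\<bar> < \<delta> \<and> p = g s"
    using param_near_point[OF par \<delta>] by blast
  have "cone_near B (g t0) u \<eta> \<rho>"
    unfolding cone_near_def
  proof (intro ballI impI)
    fix p assume "p \<in> B" "dist p (g t0) < \<rho>"
    then obtain s where s: "\<bar>s - t0\<bar> < \<delta>" "p = g s" using near by blast
    have "\<bar>Im (G s)\<bar> \<le> \<eta> * \<bar>Re (G s)\<bar>"
      by (rule in_cone_of_derivative_in_cone[where a = "t0 - \<delta>" and b = "t0 + \<delta>" and c = t0,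
          OF G cone \<open>0 < \<eta>\<close>])
        (use s(1) \<delta> in \<open>auto simp: G_def\<close>)
    then show "\<bar>Im (cnj u * (p - g t0))\<bar> \<le> \<eta> * \<bar>Re (cnj u * (p - g t0))\<bar>"
      using s(2) by (simp add: G_def)
  qed
  moreover have "graph_near B (g t0) u \<rho>"
    unfolding graph_near_def
  proof (intro ballI impI)
    fix p q assume "p \<in> B" "q \<in> B" "dist p (g t0) < \<rho>" "dist q (g t0) < \<rho>"
      and eq: "Re (cnj u * (p - g t0)) = Re (cnj u * (q - g t0))"
    then obtain s1 s2 where s: "\<bar>s1 - t0\<bar> < \<delta>" "p = g s1" "\<bar>s2 - t0\<bar> < \<delta>" "q = g s2"
      using near by metis
    note less =
      Re_less_of_derivative_in_cone[where a = "t0 - \<delta>" and b = "t0 + \<delta>", OF G cone \<open>0 < \<eta>\<close>]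
    have "s1 = s2"
      using less[of s1 s2] less[of s2 s1] eq s
      by (cases s1 s2 rule: linorder_cases) (auto simp: G_def abs_less_iff)
    then show "p = q" using s by simp
  qed
  ultimately show ?thesis using \<open>\<rho> > 0\<close> that by blast
qed

lemma Im_eq_0_of_cone:
  assumes "\<And>\<eta>. \<eta> > 0 \<Longrightarrow> \<bar>Im w\<bar> \<le> \<eta> * \<bar>Re w\<bar>"
  shows "Im w = 0"
proof (rule ccontr)
  assume "Im w \<noteq> 0"
  define \<eta> where "\<eta> = \<bar>Im w\<bar> / (2 * (\<bar>Re w\<bar> + 1))"
  have "\<bar>Im w\<bar> \<le> \<eta> * \<bar>Re w\<bar>" using \<open>Im w \<noteq> 0\<close> by (intro assms) (simp add: \<eta>_def)
  also have "\<dots> = \<bar>Im w\<bar> * (\<bar>Re w\<bar> / (2 * (\<bar>Re w\<bar> + 1)))" by (simp add: \<eta>_def)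
  also have "\<dots> < \<bar>Im w\<bar>" using \<open>Im w \<noteq> 0\<close> by (simp add: field_simps add_nonneg_pos)
  finally show False by simp
qed

lemma param_tangent_along_cone:
  assumes par: "param_of h B" "h t1 = x"
    and cone: "\<And>\<eta>. \<eta> > 0 \<Longrightarrow> \<exists>\<rho>>0. cone_near B x u \<eta> \<rho>"
  shows "Im (cnj u * vector_derivative h (at t1)) = 0"
proof -
  define w where "w = cnj u * vector_derivative h (at t1)"
  define G where "G y = cnj u * (h y - x)" for y
  have G': "(G has_vector_derivative w) (at t1)"
    unfolding G_def w_def using param_has_vector_derivative[OF par(1)]
    by (auto intro!: derivative_eq_intros)
  have "G t1 = 0" using par(2) by (simp add: G_def)
  then have lim_Re: "((\<lambda>y. Re (G y) / (y - t1)) \<longlongrightarrow> Re w) (at_right t1)"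
    and lim_Im: "((\<lambda>y. Im (G y) / (y - t1)) \<longlongrightarrow> Im w) (at_right t1)"
    using has_field_derivative_Re[OF G'] has_field_derivative_Im[OF G']
    unfolding has_field_derivative_iff by (auto intro: tendsto_mono[OF at_le])
  have "\<bar>Im w\<bar> \<le> \<eta> * \<bar>Re w\<bar>" if \<eta>: "\<eta> > 0" for \<eta>
  proof -
    obtain \<rho> where "\<rho> > 0" and \<rho>: "cone_near B x u \<eta> \<rho>" using cone[OF \<eta>] by blast
    have "isCont h t1"
      using param_continuous_on[OF par(1), of UNIV] by (simp add: continuous_on_eq_continuous_at)
    then have "\<forall>\<^sub>F y in at t1. dist (h y) x < \<rho>"
      using \<open>\<rho> > 0\<close> par(2) unfolding isCont_def by (metis tendsto_iff)
    then have "\<forall>\<^sub>F y in at_right t1. dist (h y) x < \<rho>"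
      by (rule filter_leD[OF at_le, rotated]) simp
    moreover have "\<forall>\<^sub>F y in at_right t1. y > t1" by (simp add: eventually_at_right_less)
    ultimately have "\<forall>\<^sub>F y in at_right t1. \<bar>Im (G y) / (y - t1)\<bar> \<le> \<eta> * \<bar>Re (G y) / (y - t1)\<bar>"
    proof eventually_elim
      case (elim y)
      have "h y \<in> B" using param_image[OF par(1)] by auto
      then have "\<bar>Im (G y)\<bar> \<le> \<eta> * \<bar>Re (G y)\<bar>" using \<rho> elim by (simp add: cone_near_def G_def)
      then show ?case using elim by (simp add: divide_right_mono)
    qed
    from tendsto_le[OF _ tendsto_mult_left[OF tendsto_rabs[OF lim_Re]] tendsto_rabs[OF lim_Im] this]
    show ?thesis by simp
  qed
  then show ?thesis unfolding w_def by (rule Im_eq_0_of_cone)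
qed

definition half_cone :: "complex \<Rightarrow> complex \<Rightarrow> real \<Rightarrow> real \<Rightarrow> complex set" where
  "half_cone x u \<rho> \<sigma> =
     {q. dist q x < \<rho> \<and> \<bar>Re (cnj u * (q - x))\<bar> < 2 * \<sigma> * Im (cnj u * (q - x))}"

lemma convex_half_cone: "convex (half_cone x u \<rho> \<sigma>)"
proof (rule convexI)
  fix p q :: complex and a b :: real
  assume pq: "p \<in> half_cone x u \<rho> \<sigma>" "q \<in> half_cone x u \<rho> \<sigma>" and ab: "0 \<le> a" "0 \<le> b" "a + b = 1"
  define c where "c = a *\<^sub>R p + b *\<^sub>R q"
  define P Q where "P = cnj u * (p - x)" and "Q = cnj u * (q - x)"
  have c_ball: "c \<in> ball x \<rho>" unfolding c_def
    using pq ab convexD[OF convex_ball, of p x \<rho> q a b] by (simp add: half_cone_def dist_commute)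
  have cx: "c - x = a *\<^sub>R (p - x) + b *\<^sub>R (q - x)"
    unfolding c_def using ab by (simp add: algebra_simps flip: scaleR_add_left)
  have c: "cnj u * (c - x) = a *\<^sub>R P + b *\<^sub>R Q"
    unfolding cx P_def Q_def by (simp add: scaleR_conv_of_real algebra_simps)
  have "\<bar>Re (cnj u * (c - x))\<bar> \<le> \<bar>a * Re P\<bar> + \<bar>b * Re Q\<bar>"
    unfolding c using abs_triangle_ineq by simp
  also have "\<dots> < a * (2 * \<sigma> * Im P) + b * (2 * \<sigma> * Im Q)"
    using pq ab unfolding half_cone_def P_def Q_def
    by (cases "a = 0")
      (auto simp: abs_mult intro!: add_less_le_mono mult_strict_left_mono mult_left_mono)
  also have "\<dots> = 2 * \<sigma> * Im (cnj u * (c - x))" unfolding c by (simp add: algebra_simps)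
  finally show "a *\<^sub>R p + b *\<^sub>R q \<in> half_cone x u \<rho> \<sigma>"
    using c_ball by (simp add: half_cone_def c_def dist_commute)
qed

lemma half_cone_connected_component:
  assumes "cone_near B x u (1/2) \<rho>" "\<sigma> \<in> {1, -1}"
    and "q1 \<in> half_cone x u \<rho> \<sigma>" "q2 \<in> half_cone x u \<rho> \<sigma>"
  shows "connected_component (- B) q1 q2"
proof (rule connected_componentI[OF convex_connected[OF convex_half_cone] _ assms(3,4)])
  show "half_cone x u \<rho> \<sigma> \<subseteq> - B"
    using assms(1,2) by (force simp: cone_near_def half_cone_def)
qed

lemma normal_ray_in_half_cone:
  assumes "norm u = 1" "\<sigma> \<in> {1, -1}" "0 < e" "e < \<rho>"
  shows "x + of_real (\<sigma> * e) * (\<i> * u) \<in> half_cone x u \<rho> \<sigma>"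
proof -
  have "cnj u * u = 1" using assms(1) complex_norm_square[of u] by (simp add: mult.commute)
  then have coord: "cnj u * (x + of_real (\<sigma> * e) * (\<i> * u) - x) = \<i> * of_real (\<sigma> * e)"
    by (simp add: algebra_simps)
  have "dist (x + of_real (\<sigma> * e) * (\<i> * u)) x = e"
    using assms by (auto simp: dist_norm norm_mult)
  then show ?thesis unfolding half_cone_def mem_Collect_eq coord using assms by auto
qed

lemma curve_on_normal_line:
  assumes cone: "cone_near B x u (1/2) \<rho>" and graph: "graph_near B x u \<rho>"
  obtains \<beta>0 where "\<bar>\<beta>0\<bar> \<le> \<bar>\<alpha>\<bar>/2"
    "\<And>q. q \<in> B \<Longrightarrow> dist q x < \<rho> \<Longrightarrow> Re (cnj u * (q - x)) = \<alpha> \<Longrightarrow> Im (cnj u * (q - x)) = \<beta>0"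
proof (cases "\<exists>q0\<in>B. dist q0 x < \<rho> \<and> Re (cnj u * (q0 - x)) = \<alpha>")
  case True
  then obtain q0 where q0: "q0 \<in> B" "dist q0 x < \<rho>" "Re (cnj u * (q0 - x)) = \<alpha>" by blast
  show ?thesis
  proof (rule that)
    have "\<bar>Im (cnj u * (q0 - x))\<bar> \<le> 1/2 * \<bar>Re (cnj u * (q0 - x))\<bar>"
      using cone q0(1,2) unfolding cone_near_def by blast
    then show "\<bar>Im (cnj u * (q0 - x))\<bar> \<le> \<bar>\<alpha>\<bar>/2" using q0(3) by simp
    fix q assume "q \<in> B" "dist q x < \<rho>" "Re (cnj u * (q - x)) = \<alpha>"
    then have "q = q0" using graph q0 unfolding graph_near_def by blast
    then show "Im (cnj u * (q - x)) = Im (cnj u * (q0 - x))" by simp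
  qed
next
  case False
  then show ?thesis using that[of 0] by auto
qed

lemma normal_segment_avoids_curve:
  assumes u: "norm u = 1"
    and line: "\<And>q. q \<in> B \<Longrightarrow> dist q x < \<rho> \<Longrightarrow> Re (cnj u * (q - x)) = \<alpha> \<Longrightarrow> Im (cnj u * (q - x)) = \<beta>0"
    and p: "p \<notin> B" "cnj u * (p - x) = Complex \<alpha> \<beta>" and p': "cnj u * (p' - x) = Complex \<alpha> \<beta>'"
    and side: "\<sigma> * \<beta>0 \<le> \<sigma> * \<beta>" "\<sigma> * \<beta>0 < \<sigma> * \<beta>'"
    and small: "\<bar>\<alpha>\<bar> + max \<bar>\<beta>\<bar> \<bar>\<beta>'\<bar> < \<rho>"
  shows "closed_segment p p' \<subseteq> - B"
proof
  fix q assume "q \<in> closed_segment p p'"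
  then obtain \<theta> where \<theta>: "0 \<le> \<theta>" "\<theta> \<le> 1" "q = (1 - \<theta>) *\<^sub>R p + \<theta> *\<^sub>R p'"
    unfolding closed_segment_def by auto
  define \<beta>'' where "\<beta>'' = (1 - \<theta>) * \<beta> + \<theta> * \<beta>'"
  have "cnj u * (q - x) = (1 - \<theta>) *\<^sub>R (cnj u * (p - x)) + \<theta> *\<^sub>R (cnj u * (p' - x))"
    unfolding \<theta>(3) by (simp add: scaleR_conv_of_real algebra_simps)
  then have q: "cnj u * (q - x) = Complex \<alpha> \<beta>''"
    unfolding p p' \<beta>''_def by (simp add: complex_eq_iff algebra_simps)
  have "\<bar>\<beta>''\<bar> \<le> (1 - \<theta>) * \<bar>\<beta>\<bar> + \<theta> * \<bar>\<beta>'\<bar>"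
    unfolding \<beta>''_def using \<theta> abs_triangle_ineq[of "(1 - \<theta>) * \<beta>" "\<theta> * \<beta>'"] by (simp add: abs_mult)
  also have "\<dots> \<le> max \<bar>\<beta>\<bar> \<bar>\<beta>'\<bar>" by (intro convex_bound_le) (use \<theta> in auto)
  finally have \<beta>''_le: "\<bar>\<beta>''\<bar> \<le> max \<bar>\<beta>\<bar> \<bar>\<beta>'\<bar>" .
  have "dist q x = norm (cnj u * (q - x))" using u by (simp add: dist_norm norm_mult)
  also have "\<dots> \<le> \<bar>\<alpha>\<bar> + \<bar>\<beta>''\<bar>" unfolding q using cmod_le[of "Complex \<alpha> \<beta>''"] by simp
  finally have "dist q x < \<rho>" using small \<beta>''_le by linarith
  show "q \<in> - B"
  proof
    assume "q \<in> B"
    then have "\<beta>'' = \<beta>0" using line[OF _ \<open>dist q x < \<rho>\<close>] q by simp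
    then have "\<sigma> * \<beta>0 = \<sigma> * \<beta>''" by simp
    also have "\<dots> = (1 - \<theta>) * (\<sigma> * \<beta>) + \<theta> * (\<sigma> * \<beta>')" by (simp add: \<beta>''_def algebra_simps)
    finally have "(1 - \<theta>) * (\<sigma> * \<beta> - \<sigma> * \<beta>0) + \<theta> * (\<sigma> * \<beta>' - \<sigma> * \<beta>0) = 0"
      by (simp add: algebra_simps)
    moreover have "0 \<le> (1 - \<theta>) * (\<sigma> * \<beta> - \<sigma> * \<beta>0)" using \<theta> side by simp
    ultimately have "\<theta> * (\<sigma> * \<beta>' - \<sigma> * \<beta>0) \<le> 0" by linarith
    then have "\<theta> = 0" using \<theta>(1) side(2) by (simp add: mult_le_0_iff)
    then show False using \<open>q \<in> B\<close> p(1) \<theta>(3) by simp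
  qed
qed

text \<open>The joining segment is perpendicular to the tangent and runs away from the only point
  of B on its line.\<close>
lemma connected_component_half_cone:
  assumes u: "norm u = 1" and "x \<in> B"
    and cone: "cone_near B x u (1/2) \<rho>" and graph: "graph_near B x u \<rho>"
    and p: "p \<notin> B" "dist p x < \<rho>/4"
  obtains \<sigma> q where "\<sigma> \<in> {1, -1}" "q \<in> half_cone x u \<rho> \<sigma>" "connected_component (- B) p q"
proof -
  define R where "R q = cnj u * (q - x)" for q
  have "u * cnj u = 1" using u complex_norm_square[of u] by simp
  then have R_inv: "x + u * R q = q" for q by (simp add: R_def flip: mult.assoc)
  have dist_R: "dist q x = norm (R q)" for q unfolding R_def dist_norm norm_mult using u by simp
  have in_half_cone: "q \<in> half_cone x u \<rho> \<sigma> \<longleftrightarrow> dist q x < \<rho> \<and> \<bar>Re (R q)\<bar> < 2 * \<sigma> * Im (R q)"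
    for q \<sigma> unfolding half_cone_def R_def by simp
  define \<alpha> \<beta> where "\<alpha> = Re (R p)" and "\<beta> = Im (R p)"
  have R_p: "R p = Complex \<alpha> \<beta>" by (simp add: \<alpha>_def \<beta>_def)
  have \<alpha>\<beta>: "\<bar>\<alpha>\<bar> < \<rho>/4" "\<bar>\<beta>\<bar> < \<rho>/4"
    using p(2) abs_Re_le_cmod[of "R p"] abs_Im_le_cmod[of "R p"] dist_R[of p]
    by (auto simp: \<alpha>_def \<beta>_def)
  show ?thesis
  proof (cases "p \<in> half_cone x u \<rho> 1 \<or> p \<in> half_cone x u \<rho> (-1)")
    case True
    then show ?thesis using that connected_component_refl[of p "- B"] p(1) by blast
  next
    case False
    have "dist p x < \<rho>" using p(2) zero_le_dist[of p x] by linarith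
    then have flat: "2 * \<bar>\<beta>\<bar> \<le> \<bar>\<alpha>\<bar>"
      using False unfolding in_half_cone \<alpha>_def \<beta>_def by (auto split: abs_split)
    have "\<alpha> \<noteq> 0"
    proof
      assume "\<alpha> = 0"
      then have "R p = 0" using flat R_p by (simp add: complex_eq_iff)
      then show False using R_inv[of p] p(1) \<open>x \<in> B\<close> by simp
    qed
    obtain \<beta>0 where "\<bar>\<beta>0\<bar> \<le> \<bar>\<alpha>\<bar>/2"
      and line: "\<And>q. q \<in> B \<Longrightarrow> dist q x < \<rho> \<Longrightarrow> Re (R q) = \<alpha> \<Longrightarrow> Im (R q) = \<beta>0"
      using curve_on_normal_line[OF cone graph] unfolding R_def by metis
    define \<sigma> :: real where "\<sigma> = (if \<beta>0 \<le> \<beta> then 1 else -1)"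
    have \<sigma>: "\<sigma> \<in> {1, -1}" "\<sigma> * \<beta>0 \<le> \<sigma> * \<beta>" "\<sigma> * \<beta>0 < \<sigma> * (\<sigma> * \<bar>\<alpha>\<bar>)"
      using \<open>\<bar>\<beta>0\<bar> \<le> \<bar>\<alpha>\<bar>/2\<close> \<open>\<alpha> \<noteq> 0\<close> by (auto simp: \<sigma>_def)
    define p' where "p' = x + u * Complex \<alpha> (\<sigma> * \<bar>\<alpha>\<bar>)"
    have R_p': "R p' = Complex \<alpha> (\<sigma> * \<bar>\<alpha>\<bar>)"
      using R_inv[of p'] u by (auto simp: p'_def)
    have "norm (R p') \<le> \<bar>\<alpha>\<bar> + \<bar>\<sigma> * \<bar>\<alpha>\<bar>\<bar>"
      unfolding R_p' using cmod_le[of "Complex \<alpha> (\<sigma> * \<bar>\<alpha>\<bar>)"] by simp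
    then have "p' \<in> half_cone x u \<rho> \<sigma>"
      using \<sigma>(1) \<alpha>\<beta> \<open>\<alpha> \<noteq> 0\<close> unfolding in_half_cone dist_R R_p' by auto
    moreover have "closed_segment p p' \<subseteq> - B"
      by (rule normal_segment_avoids_curve[OF u line[unfolded R_def] p(1)
            R_p[unfolded R_def] R_p'[unfolded R_def] \<sigma>(2,3)])
        (use \<sigma>(1) \<alpha>\<beta> flat in \<open>auto simp: R_def\<close>)
    then have "connected_component (- B) p p'"
      by (intro connected_componentI[OF connected_segment]) auto
    ultimately show ?thesis using that \<sigma>(1) by blast
  qed
qed

lemma normal_ray_in_component:
  assumes u: "norm u = 1" and "x \<in> B" "\<rho> > 0"
    and cone: "cone_near B x u (1/2) \<rho>" and graph: "graph_near B x u \<rho>"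
    and S: "x \<in> closure S" "S \<inter> B = {}" "\<And>p q. connected_component (- B) p q \<Longrightarrow> p \<in> S \<Longrightarrow> q \<in> S"
  shows "\<exists>\<sigma>\<in>{1, -1}. \<forall>e. 0 < e \<longrightarrow> e < \<rho> \<longrightarrow> x + of_real (\<sigma> * e) * (\<i> * u) \<in> S"
proof -
  obtain p where p: "p \<in> S" "dist p x < \<rho>/4"
    using S(1) \<open>\<rho> > 0\<close> unfolding closure_approachable
    by (metis zero_less_divide_iff zero_less_numeral)
  then have "p \<notin> B" using S(2) by blast
  with connected_component_half_cone[OF u \<open>x \<in> B\<close> cone graph _ p(2)]
  obtain \<sigma> q where \<sigma>: "\<sigma> \<in> {1, -1}" "q \<in> half_cone x u \<rho> \<sigma>" "connected_component (- B) p q"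
    by blast
  have "x + of_real (\<sigma> * e) * (\<i> * u) \<in> S" if "0 < e" "e < \<rho>" for e
  proof (rule S(3)[OF connected_component_trans[OF \<sigma>(3)] p(1)])
    show "connected_component (- B) q (x + of_real (\<sigma> * e) * (\<i> * u))"
      by (rule half_cone_connected_component[OF cone \<sigma>(1,2)
            normal_ray_in_half_cone[OF u \<sigma>(1) that]])
  qed
  with \<sigma>(1) show ?thesis by blast
qed

lemma normal_rays_opposite_sides:
  assumes u: "norm u = 1" and "x \<in> B" "\<rho> > 0"
    and cone: "cone_near B x u (1/2) \<rho>" and graph: "graph_near B x u \<rho>"
    and closure: "x \<in> closure (inside B)" "x \<in> closure (outside B)"
  obtains \<sigma> where "\<sigma> \<in> {1, -1}"
    "\<And>e. 0 < e \<Longrightarrow> e < \<rho> \<Longrightarrow> x + of_real (\<sigma> * e) * (\<i> * u) \<in> inside B"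
    "\<And>e. 0 < e \<Longrightarrow> e < \<rho> \<Longrightarrow> x - of_real (\<sigma> * e) * (\<i> * u) \<in> outside B"
proof -
  from normal_ray_in_component[OF u \<open>x \<in> B\<close> \<open>\<rho> > 0\<close> cone graph closure(1)
      inside_no_overlap inside_same_component]
  obtain \<sigma> where \<sigma>: "\<sigma> \<in> {1, -1}"
    "\<forall>e. 0 < e \<longrightarrow> e < \<rho> \<longrightarrow> x + of_real (\<sigma> * e) * (\<i> * u) \<in> inside B" ..
  from normal_ray_in_component[OF u \<open>x \<in> B\<close> \<open>\<rho> > 0\<close> cone graph closure(2)
      outside_no_overlap outside_same_component]
  obtain \<sigma>' where \<sigma>': "\<sigma>' \<in> {1, -1}"
    "\<forall>e. 0 < e \<longrightarrow> e < \<rho> \<longrightarrow> x + of_real (\<sigma>' * e) * (\<i> * u) \<in> outside B" ..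
  have "\<sigma>' \<noteq> \<sigma>"
  proof
    assume "\<sigma>' = \<sigma>"
    have "0 < \<rho>/2" "\<rho>/2 < \<rho>" using \<open>\<rho> > 0\<close> by auto
    then have "x + of_real (\<sigma> * (\<rho>/2)) * (\<i> * u) \<in> inside B"
      and "x + of_real (\<sigma> * (\<rho>/2)) * (\<i> * u) \<in> outside B"
      using \<sigma>(2) \<sigma>'(2) \<open>\<sigma>' = \<sigma>\<close> by blast+
    then show False using inside_Int_outside[of B] by blast
  qed
  then have "\<sigma>' = - \<sigma>" using \<sigma>(1) \<sigma>'(1) by auto
  show ?thesis
  proof (rule that[OF \<sigma>(1)])
    fix e :: real assume e: "0 < e" "e < \<rho>"
    show "x + of_real (\<sigma> * e) * (\<i> * u) \<in> inside B" using \<sigma>(2) e by blast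
    have "x + of_real (\<sigma>' * e) * (\<i> * u) \<in> outside B" using \<sigma>'(2) e by blast
    then show "x - of_real (\<sigma> * e) * (\<i> * u) \<in> outside B" using \<open>\<sigma>' = - \<sigma>\<close> by simp
  qed
qed

section \<open>The inward normal\<close>

lemma unit_orthogonal_to_line:
  assumes u: "norm u = 1" and v: "norm v = 1"
    and d: "d \<noteq> 0" "Im (cnj u * d) = 0" and orth: "Re (cnj v * d) = 0"
  shows "v = \<i> * u \<or> v = - (\<i> * u)"
proof -
  have ucu: "u * cnj u = 1" using u complex_norm_square[of u] by simp
  define k where "k = Re (cnj u * d)"
  have "cnj u * d = of_real k" using d(2) by (simp add: k_def complex_eq_iff)
  then have dk: "d = of_real k * u" using ucu by (metis mult.assoc mult.commute mult_1)
  then have "k \<noteq> 0" using d(1) by auto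
  define z where "z = cnj v * u"
  have "cnj v * d = of_real k * z" unfolding dk z_def by (simp add: algebra_simps)
  then have "k * Re z = 0" using orth by simp
  then have "Re z = 0" using \<open>k \<noteq> 0\<close> by simp
  moreover have "norm z = 1" using u v by (simp add: z_def norm_mult)
  ultimately have "z = \<i> \<or> z = - \<i>" by (auto simp: cmod_def complex_eq_iff abs_if split: if_splits)
  moreover have "v = cnj z * u" using ucu by (simp add: z_def mult.commute mult.left_commute)
  ultimately show ?thesis by auto
qed

lemma inward_normal_eqI:
  assumes "norm v = 1"
    and "\<exists>g t. param_of g B \<and> g t = x \<and> Re (cnj v * vector_derivative g (at t)) = 0"
    and "\<forall>\<^sub>F e in at_right 0. x + of_real e * v \<in> inside B"
    and "\<And>w. norm w = 1 \<Longrightarrow>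
            \<exists>g t. param_of g B \<and> g t = x \<and> Re (cnj w * vector_derivative g (at t)) = 0 \<Longrightarrow>
            \<forall>\<^sub>F e in at_right 0. x + of_real e * w \<in> inside B \<Longrightarrow> w = v"
  shows "inward_normal B x = v"
  unfolding inward_normal_def
proof (rule the_equality)
  show "norm v = 1 \<and> (\<exists>g t. param_of g B \<and> g t = x \<and> Re (cnj v * vector_derivative g (at t)) = 0) \<and>
      (\<forall>\<^sub>F e in at_right 0. x + of_real e * v \<in> inside B)"
    using assms(1-3) by blast
qed (use assms(4) in blast)

text \<open>Every normal of B at x is orthogonal to the tangent line, which is unique because B
  lies in arbitrarily flat cones around it; of the two unit normals only one points inside.\<close>
lemma inward_normal_eq_normal_ray:
  assumes par: "param_of g B" "g t0 = x" and u: "u = sgn (vector_derivative g (at t0))"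
    and cones: "\<And>\<eta>. \<eta> > 0 \<Longrightarrow> \<exists>\<rho>>0. cone_near B x u \<eta> \<rho>"
    and \<sigma>: "\<sigma> \<in> {1, -1}" and "\<rho> > 0"
    and inside: "\<And>e. 0 < e \<Longrightarrow> e < \<rho> \<Longrightarrow> x + of_real (\<sigma> * e) * (\<i> * u) \<in> inside B"
    and outside: "\<And>e. 0 < e \<Longrightarrow> e < \<rho> \<Longrightarrow> x - of_real (\<sigma> * e) * (\<i> * u) \<in> outside B"
  shows "inward_normal B x = of_real \<sigma> * (\<i> * u)"
proof (rule inward_normal_eqI)
  define v where "v = of_real \<sigma> * (\<i> * u)"
  have "norm u = 1" using param_derivative_nonzero[OF par(1)] by (simp add: u norm_sgn)
  then show "norm v = 1" using \<sigma> by (auto simp: v_def norm_mult)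
  have "cnj u * vector_derivative g (at t0) = of_real (norm (vector_derivative g (at t0)))"
    unfolding u by (rule cnj_sgn_mult_self)
  then have "Re (cnj v * vector_derivative g (at t0)) = 0" by (simp add: v_def mult.assoc)
  then show "\<exists>h t. param_of h B \<and> h t = x \<and> Re (cnj v * vector_derivative h (at t)) = 0"
    using par by blast
  have ray: "x + of_real e * v = x + of_real (\<sigma> * e) * (\<i> * u)" for e
    by (simp add: v_def algebra_simps)
  show "\<forall>\<^sub>F e in at_right 0. x + of_real e * v \<in> inside B"
    unfolding eventually_at_right_field ray using \<open>\<rho> > 0\<close> inside by blast
  fix w assume w: "norm w = 1"
    "\<exists>h t. param_of h B \<and> h t = x \<and> Re (cnj w * vector_derivative h (at t)) = 0"
    "\<forall>\<^sub>F e in at_right 0. x + of_real e * w \<in> inside B"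
  then obtain h t1 where h: "param_of h B" "h t1 = x" "Re (cnj w * vector_derivative h (at t1)) = 0"
    by blast
  have "w = \<i> * u \<or> w = - (\<i> * u)"
    by (rule unit_orthogonal_to_line[OF \<open>norm u = 1\<close> w(1) param_derivative_nonzero[OF h(1)]
          param_tangent_along_cone[OF h(1,2) cones] h(3)])
  moreover have "w \<noteq> - v"
  proof
    assume "w = - v"
    have "\<forall>\<^sub>F e in at_right (0::real). 0 < e \<and> e < \<rho>"
      using \<open>\<rho> > 0\<close> by (auto simp: eventually_at_right_field)
    with w(3) have "\<forall>\<^sub>F e in at_right (0::real). False"
    proof eventually_elim
      case (elim e)
      have "x + of_real e * (- v) = x - of_real (\<sigma> * e) * (\<i> * u)"
        by (simp add: v_def algebra_simps)
      then have "x - of_real (\<sigma> * e) * (\<i> * u) \<in> inside B" using elim \<open>w = - v\<close> by metis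
      moreover have "x - of_real (\<sigma> * e) * (\<i> * u) \<in> outside B" using outside elim by blast
      ultimately show False using inside_Int_outside[of B] by blast
    qed
    then show False by (simp add: trivial_limit_at_right_real)
  qed
  ultimately show "w = v" using \<sigma> by (auto simp: v_def)
qed

lemma norm_inward_normal:
  assumes par: "param_of g B" and "x \<in> B"
  shows "norm (inward_normal B x) = 1"
proof -
  obtain t0 where x: "g t0 = x" using \<open>x \<in> B\<close> param_image[OF par] by auto
  define u where "u = sgn (vector_derivative g (at t0))"
  have u: "norm u = 1" using param_derivative_nonzero[OF par] by (simp add: u_def norm_sgn)
  have cones: "\<exists>\<rho>>0. cone_near B x u \<eta> \<rho>" if "\<eta> > 0" for \<eta>
    using param_cone_graph_near[OF par that, of t0] unfolding x u_def by metis
  obtain \<rho> where \<rho>: "\<rho> > 0" "cone_near B x u (1/2) \<rho>" "graph_near B x u \<rho>"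
    using param_cone_graph_near[OF par, of "1/2" t0] unfolding x u_def by auto
  have "x \<in> closure (inside B)" "x \<in> closure (outside B)"
    using param_frontier_inside_outside[OF par] \<open>x \<in> B\<close> by (auto simp: frontier_def)
  then obtain \<sigma> where \<sigma>: "\<sigma> \<in> {1, -1}"
    "\<And>e. 0 < e \<Longrightarrow> e < \<rho> \<Longrightarrow> x + of_real (\<sigma> * e) * (\<i> * u) \<in> inside B"
    "\<And>e. 0 < e \<Longrightarrow> e < \<rho> \<Longrightarrow> x - of_real (\<sigma> * e) * (\<i> * u) \<in> outside B"
    using normal_rays_opposite_sides[OF u \<open>x \<in> B\<close> \<rho>] by blast
  have "inward_normal B x = of_real \<sigma> * (\<i> * u)"
    using inward_normal_eq_normal_ray[OF par x u_def cones \<sigma>(1) \<rho>(1) \<sigma>(2,3)] by blast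
  then show ?thesis using u \<sigma>(1) by (auto simp: norm_mult)
qed

section \<open>Lebesgue--Stieltjes integrals and the reflection term\<close>

lemma LS_integral_eq_0:
  assumes "\<And>u. 0 < u \<Longrightarrow> u \<le> t \<Longrightarrow> f u = 0"
  shows "LS_integral F f t = 0"
proof -
  have "(\<lambda>u. indicator {0<..t} u *\<^sub>R f u) = (\<lambda>u. 0)"
    using assms by (auto simp: indicator_def)
  then show ?thesis unfolding LS_integral_def by simp
qed

lemma norm_LS_integral_le:
  fixes F :: "real \<Rightarrow> real" and f :: "real \<Rightarrow> 'a::{banach,second_countable_topology}"
  assumes F: "continuous_on {0..} F" "mono_on {0..} F" and "0 \<le> t"
    and f: "\<And>u. 0 < u \<Longrightarrow> u \<le> t \<Longrightarrow> norm (f u) \<le> C"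
  shows "norm (LS_integral F f t) \<le> C * (F t - F 0)"
proof (cases "t = 0")
  case True
  have "LS_integral F f t = 0" by (rule LS_integral_eq_0) (use True in auto)
  then show ?thesis using True by simp
next
  case False
  then have "norm (f t) \<le> C" using f \<open>0 \<le> t\<close> by simp
  then have "0 \<le> C" using norm_ge_zero order_trans by blast
  define G where "G u = F (max 0 u)" for u
  define M where "M = interval_measure G"
  have G_mono: "G u \<le> G v" if "u \<le> v" for u v
    unfolding G_def by (rule mono_onD[OF F(2)]) (use that in auto)
  have "continuous_on UNIV G"
    unfolding G_def by (rule continuous_on_compose2[OF F(1)]) (auto intro!: continuous_intros)
  then have G_right: "continuous (at_right a) G" for a
    by (simp add: continuous_on_eq_continuous_at continuous_at_imp_continuous_at_within)
  have "emeasure M {0<..t} < \<infinity>"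
    unfolding M_def using emeasure_interval_measure_Ioc[OF \<open>0 \<le> t\<close> G_mono G_right] by simp
  then have int: "integrable M (\<lambda>u. C * indicator {0<..t} u)"
    by (intro integrable_mult_right) (simp add: integrable_indicator_iff M_def)
  have "norm (LS_integral F f t) \<le> (\<integral>u. norm (indicator {0<..t} u *\<^sub>R f u) \<partial>M)"
    unfolding LS_integral_def M_def G_def by (rule integral_norm_bound)
  also have "\<dots> \<le> (\<integral>u. C * indicator {0<..t} u \<partial>M)"
    by (rule integral_mono'[OF int]) (use f \<open>0 \<le> C\<close> in \<open>auto simp: indicator_def\<close>)
  also have "\<dots> = C * measure M {0<..t}" by (simp add: M_def)
  also have "measure M {0<..t} = F t - F 0"
    unfolding M_def using measure_interval_measure_Ioc[OF \<open>0 \<le> t\<close> G_mono G_right]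
    by (simp add: G_def \<open>0 \<le> t\<close>)
  finally show ?thesis .
qed

lemma norm_reflection_term_le:
  fixes X :: "real \<Rightarrow> complex" and L s :: "nat \<Rightarrow> real \<Rightarrow> real"
  assumes "i \<le> m" "0 \<le> \<tau>" and "smooth_simple_closed_curve (B i)"
    and L: "continuous_on {0..} (L i)" "mono_on {0..} (L i)"
    and s: "\<And>u. 0 < u \<Longrightarrow> u \<le> \<tau> \<Longrightarrow> s i (L i u) \<in> {-1, 1}"
    and X: "\<And>u. 0 < u \<Longrightarrow> u \<le> \<tau> \<Longrightarrow> X u \<in> V"
    and V: "\<And>j. j \<le> m \<Longrightarrow> j \<noteq> i \<Longrightarrow> V \<inter> B j = {}"
  shows "norm (\<Sum>j\<le>m. LS_integral (L j)
            (\<lambda>u. of_real (s j (L j u) * indicator (B j) (X u)) * inward_normal (B j) (X u)) \<tau>)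
         \<le> L i \<tau> - L i 0"
proof -
  define f where "f j u = of_real (s j (L j u) * indicator (B j) (X u)) * inward_normal (B j) (X u)"
    for j u
  have "LS_integral (L j) (f j) \<tau> = 0" if j: "j \<le> m" "j \<noteq> i" for j
  proof (rule LS_integral_eq_0)
    fix u assume "0 < u" "u \<le> \<tau>"
    then have "X u \<notin> B j" using X V[OF j] by blast
    then show "f j u = 0" by (simp add: f_def)
  qed
  then have "(\<Sum>j\<le>m. LS_integral (L j) (f j) \<tau>) = LS_integral (L i) (f i) \<tau>"
    using \<open>i \<le> m\<close> by (subst sum.remove[of _ i]) auto
  also have "norm \<dots> \<le> 1 * (L i \<tau> - L i 0)"
  proof (rule norm_LS_integral_le[OF L \<open>0 \<le> \<tau>\<close>])
    fix u assume u: "0 < u" "u \<le> \<tau>"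
    have "\<bar>s i (L i u)\<bar> = 1" using s[OF u] by auto
    moreover have "norm (inward_normal (B i) p) = 1" if "p \<in> B i" for p
      using norm_inward_normal \<open>smooth_simple_closed_curve (B i)\<close> that
      unfolding smooth_simple_closed_curve_def by blast
    ultimately show "norm (f i u) \<le> 1" by (cases "X u \<in> B i") (auto simp: f_def norm_mult)
  qed
  finally show ?thesis by (simp add: f_def[abs_def])
qed

section \<open>Barriers near the starting point\<close>

lemma curve_point_between:
  assumes "closed S" "a \<notin> S" "b \<notin> S"
    and sides: "(a \<in> pos_side S \<and> b \<in> neg_side S) \<or> (a \<in> neg_side S \<and> b \<in> pos_side S)"
  obtains z where "z \<in> S" "z \<in> closed_segment a b"
proof -
  have pos: "p \<in> inside S" if "p \<in> pos_side S" "p \<notin> S" for p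
    using that closure_inside_subset[OF assms(1)] by (auto simp: pos_side_def)
  have neg: "p \<notin> inside S" if "p \<in> neg_side S" for p
    using that closure_outside_subset[OF assms(1)] inside_Int_outside[of S] inside_no_overlap[of S]
    unfolding neg_side_def by blast
  have "closed_segment a b \<inter> inside S \<noteq> {}" "closed_segment a b - inside S \<noteq> {}"
    using sides pos[of a] pos[of b] neg[of a] neg[of b] assms(2,3) by auto
  then have "closed_segment a b \<inter> frontier (inside S) \<noteq> {}"
    by (intro connected_Int_frontier) auto
  then show ?thesis using frontier_inside_subset[OF assms(1)] that by blast
qed

lemma connected_Int_Union_closed_disjoint:
  assumes conn: "connected (V \<inter> (\<Union>k\<in>I. B k))" and "finite I"
    and closed: "\<And>k. k \<in> I \<Longrightarrow> closed (B k)"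
    and disj: "\<And>k l. k \<in> I \<Longrightarrow> l \<in> I \<Longrightarrow> k \<noteq> l \<Longrightarrow> B k \<inter> B l = {}"
    and "i \<in> I" "V \<inter> B i \<noteq> {}" "j \<in> I" "j \<noteq> i"
  shows "V \<inter> B j = {}"
proof (rule ccontr)
  assume "V \<inter> B j \<noteq> {}"
  let ?C = "\<Union>k\<in>I - {j}. B k"
  have "closed ?C" using closed \<open>finite I\<close> by (intro closed_UN) auto
  moreover have "V \<inter> (\<Union>k\<in>I. B k) \<subseteq> B j \<union> ?C" by auto
  moreover have "B j \<inter> ?C \<inter> (V \<inter> (\<Union>k\<in>I. B k)) = {}" using disj \<open>j \<in> I\<close> by blast
  moreover have "B j \<inter> (V \<inter> (\<Union>k\<in>I. B k)) \<noteq> {}" using \<open>V \<inter> B j \<noteq> {}\<close> \<open>j \<in> I\<close> by blast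
  moreover have "?C \<inter> (V \<inter> (\<Union>k\<in>I. B k)) \<noteq> {}" using assms(5-8) by blast
  ultimately show False using conn closed[OF \<open>j \<in> I\<close>] unfolding connected_closed by blast
qed

lemma r_delta_lt_rho:
  assumes "0 < r_delta \<delta> D B m lp lm" "0 < \<delta>" "\<delta> < 1"
  shows "r_delta \<delta> D B m lp lm < rho D B m"
proof -
  have le: "r_delta \<delta> D B m lp lm \<le> \<delta> * rho D B m"
    unfolding r_delta_def using assms(2) by (intro mult_left_mono) auto
  then have "rho D B m > 0" using assms(1,2) by (smt (verit) mult_nonneg_nonpos)
  then show ?thesis using le assms(3) by (smt (verit) mult_less_cancel_right2)
qed

lemma rho_connected_ball:
  assumes "r < rho D B m" "x \<in> D"
  obtains R where "r < R" "connected (ball x R \<inter> (\<Union>j\<le>m. B j))"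
proof -
  define S where "S = {r. r \<ge> 0 \<and> (\<forall>r'\<le>r. \<forall>x\<in>D. connected (ball x r' \<inter> (\<Union>j\<le>m. B j)))}"
  have "\<exists>R\<in>S. r < R"
  proof (cases "bdd_above S")
    case True
    have "0 \<in> S" by (auto simp: S_def ball_empty)
    then show ?thesis
      using assms(1) True less_cSup_iff[of S r] unfolding rho_def S_def[symmetric] by auto
  next
    case False
    then show ?thesis unfolding bdd_above_def by (meson not_le)
  qed
  then show ?thesis using that assms(2) unfolding S_def by blast
qed

lemma cball_disjoint_other_barriers:
  assumes "r < rho D B m" "x \<in> D" and closed: "\<And>j. j \<le> m \<Longrightarrow> closed (B j)"
    and disj: "\<And>j k. j \<le> m \<Longrightarrow> k \<le> m \<Longrightarrow> j \<noteq> k \<Longrightarrow> B j \<inter> B k = {}"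
    and "i \<le> m" "x \<notin> B i" "y \<notin> B i" "dist x y < r"
    and sides: "(x \<in> pos_side (B i) \<and> y \<in> neg_side (B i)) \<or>
                (x \<in> neg_side (B i) \<and> y \<in> pos_side (B i))"
    and "j \<le> m" "j \<noteq> i"
  shows "cball x r \<inter> B j = {}"
proof -
  obtain R where "r < R" and conn: "connected (ball x R \<inter> (\<Union>j\<le>m. B j))"
    using rho_connected_ball[OF assms(1,2)] by metis
  obtain z where "z \<in> B i" "z \<in> closed_segment x y"
    using curve_point_between[OF closed[OF \<open>i \<le> m\<close>] assms(6,7) sides] by blast
  then have "z \<in> ball x R \<inter> B i"
    using dist_in_closed_segment[of z x y] \<open>dist x y < r\<close> \<open>r < R\<close> by (auto simp: dist_commute)
  then have "ball x R \<inter> B j = {}"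
    by (intro connected_Int_Union_closed_disjoint[OF conn finite_atMost closed disj, of i])
      (use assms(5,10,11) in auto)
  moreover have "cball x r \<subseteq> ball x R" using \<open>r < R\<close> by (simp add: subset_iff)
  ultimately show ?thesis by blast
qed

section \<open>Confinement to the ball\<close>

lemma E1_nonneg: "0 \<le> E1 s"
  unfolding E1_def by (auto intro!: Inf_greatest)

lemma continuous_path_stays_in_ball:
  fixes X :: "real \<Rightarrow> 'a::real_normed_vector"
  assumes X: "continuous_on {0..t} X" and "0 \<le> t" "X 0 \<in> ball c r"
    and bound: "\<And>\<tau>. 0 < \<tau> \<Longrightarrow> \<tau> \<le> t \<Longrightarrow> X ` {0..\<tau>} \<subseteq> cball c r \<Longrightarrow> X \<tau> \<in> ball c r"
  shows "X t \<in> ball c r"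
proof (rule ccontr)
  assume "X t \<notin> ball c r"
  define T where "T = {0..t} \<inter> X -` (- ball c r)"
  have "closed T" unfolding T_def by (rule continuous_closed_preimage[OF X]) auto
  moreover have "T \<noteq> {}" using \<open>X t \<notin> ball c r\<close> \<open>0 \<le> t\<close> unfolding T_def by auto
  ultimately have "Inf T \<in> T" by (intro closed_contains_Inf) (auto simp: T_def)
  define \<tau> where "\<tau> = Inf T"
  have \<tau>: "0 \<le> \<tau>" "\<tau> \<le> t" "X \<tau> \<notin> ball c r" using \<open>Inf T \<in> T\<close> unfolding \<tau>_def T_def by auto
  then have "0 < \<tau>" using assms(3) by (cases "\<tau> = 0") auto
  have "X u \<in> ball c r" if "0 \<le> u" "u < \<tau>" for u
  proof (rule ccontr)
    assume "X u \<notin> ball c r"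
    then have "u \<in> T" using that \<tau> unfolding T_def by auto
    then show False using cInf_lower[of u T] that unfolding \<tau>_def by (auto simp: T_def)
  qed
  then have "X ` {0..<\<tau>} \<subseteq> cball c r" by (force simp: less_imp_le)
  then have "X ` closure {0..<\<tau>} \<subseteq> cball c r"
    by (intro image_closure_subset continuous_on_subset[OF X]) (use \<tau> \<open>0 < \<tau>\<close> in auto)
  then show False using bound[OF \<open>0 < \<tau>\<close> \<tau>(2)] \<tau>(3) \<open>0 < \<tau>\<close> by simp
qed

lemma norm_le_of_close_to_segment:
  assumes "norm (w - of_real a * v) \<le> e" "0 \<le> a" "a \<le> 1"
  shows "norm w \<le> e + norm (v :: 'a::real_normed_div_algebra)"
proof -
  have "norm w \<le> norm (w - of_real a * v) + norm (of_real a * v)"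
    using norm_triangle_ineq[of "w - of_real a * v" "of_real a * v"] by simp
  also have "norm (of_real a * v) \<le> norm v"
    using assms(2,3) by (simp add: norm_mult mult_left_le_one_le)
  finally show ?thesis using assms(1) by simp
qed

theorem mainTheorem4:
  fixes D D0 :: "complex set" and B :: "nat \<Rightarrow> complex set" and m :: nat
    and lp lm :: "nat \<Rightarrow> real"
    and x0 y :: complex and X W :: "real \<Rightarrow> complex"
    and L :: "nat \<Rightarrow> real \<Rightarrow> real" and s :: "nat \<Rightarrow> real \<Rightarrow> real"
    and \<alpha> \<beta> \<gamma> \<delta> :: real and i :: nat
  defines "r \<equiv> r_delta \<delta> D B m lp lm"
  assumes D0: "open D0" "bounded D0" and D_def: "D = closure D0"
    and D_conn: "connected D" and D_sc: "simply_connected D"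
    and B0: "B 0 = frontier D"
    and B_smooth: "\<And>j. j \<le> m \<Longrightarrow> smooth_simple_closed_curve (B j)"
    and B_in: "\<And>j. 1 \<le> j \<Longrightarrow> j \<le> m \<Longrightarrow> B j \<subseteq> D0"
    and B_disj: "\<And>j k. j \<le> m \<Longrightarrow> k \<le> m \<Longrightarrow> j \<noteq> k \<Longrightarrow> B j \<inter> B k = {}"
    and lam_pos: "\<And>j. 1 \<le> j \<Longrightarrow> j \<le> m \<Longrightarrow> lp j > 0 \<and> lm j > 0"
    \<comment> \<open>driving paths: Wiener path and the Markov-chain paths (pathwise properties)\<close>
    and W_cont: "continuous_on {0..} W" and W0: "W 0 = 0"
    and s_vals: "\<And>j t. j \<le> m \<Longrightarrow> t \<ge> 0 \<Longrightarrow> s j t \<in> {-1, 1}"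
    and s_cadlag: "\<And>j. j \<le> m \<Longrightarrow> cadlag_on_nonneg (s j)"
    and s0: "\<And>t. s 0 t = 1"
    and s_init: "\<And>j. 1 \<le> j \<Longrightarrow> j \<le> m \<Longrightarrow>
                   s j 0 = (if x0 \<in> pos_side (B j) then 1 else -1)"
    \<comment> \<open>snapping-out Brownian motion started at x0\<close>
    and X_cont: "continuous_on {0..} X" and X_in_D: "\<And>t. t \<ge> 0 \<Longrightarrow> X t \<in> D"
    and L_cont: "\<And>j. j \<le> m \<Longrightarrow> continuous_on {0..} (L j)"
    and L_mono: "\<And>j. j \<le> m \<Longrightarrow> mono_on {0..} (L j)"
    and L0: "\<And>j. j \<le> m \<Longrightarrow> L j 0 = 0"
    and L_nonneg: "\<And>j t. j \<le> m \<Longrightarrow> t \<ge> 0 \<Longrightarrow> L j t \<ge> 0"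
    and SDE: "\<And>t. t \<ge> 0 \<Longrightarrow> X t = x0 + W t +
                 (\<Sum>j\<le>m. LS_integral (L j)
                    (\<lambda>u. (of_real (s j (L j u) * indicator (B j) (X u)) :: complex)
                          * inward_normal (B j) (X u)) t)"
    and L_supp: "\<And>j t. j \<le> m \<Longrightarrow> t \<ge> 0 \<Longrightarrow>
                   L j t = LS_integral (L j) (\<lambda>u. indicator (B j) (X u) :: real) t"
    and sides: "\<And>j t. j \<le> m \<Longrightarrow> t \<ge> 0 \<Longrightarrow>
                   (s j (L j t) = 1 \<longrightarrow> X t \<in> pos_side (B j)) \<and>
                   (s j (L j t) = -1 \<longrightarrow> X t \<in> neg_side (B j))"
    \<comment> \<open>hypotheses of the theorem\<close>
    and abg: "\<alpha> > 0" "\<beta> > 0" "\<gamma> > 0" "\<gamma> < 1/5"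
    and del: "0 < \<delta>" "\<delta> < 1/2"
    and i: "1 \<le> i" "i \<le> m"
    and x0_in: "x0 \<in> calD \<delta> D B m lp lm" and y_in: "y \<in> calD \<delta> D B m lp lm"
    and close: "norm (x0 - y) \<le> 4/5 * r"
    and diff_sides: "(x0 \<in> pos_side (B i) \<and> y \<in> neg_side (B i)) \<or>
                     (x0 \<in> neg_side (B i) \<and> y \<in> pos_side (B i))"
    \<comment> \<open>the event A\<close>
    and A1: "E1 (s i) < ereal (\<alpha> * r)"
    and A2: "E2 (s i) > ereal (\<beta> * r)"
    and A3: "\<And>t. 0 \<le> t \<Longrightarrow> t \<le> r\<^sup>2 \<Longrightarrow>
               norm (W t - of_real (t / r\<^sup>2) * (y - x0)) \<le> \<gamma> * r"
  shows "\<forall>t. 0 \<le> t \<and> t \<le> r\<^sup>2 \<and> L i t < (1/5 - \<gamma>) * r \<longrightarrow> X t \<in> ball x0 r"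
proof (intro allI impI)
  fix t assume t: "0 \<le> t \<and> t \<le> r\<^sup>2 \<and> L i t < (1/5 - \<gamma>) * r"
  have "0 < \<alpha> * r"
    using E1_nonneg[of "s i"] A1 by (metis ereal_less(2) order.strict_trans1 zero_ereal_def)
  then have "0 < r" using abg(1) by (simp add: zero_less_mult_iff)
  have closed_B: "closed (B j)" if "j \<le> m" for j
    using B_smooth[OF that] param_closed unfolding smooth_simple_closed_curve_def by blast
  have "r < rho D B m" using r_delta_lt_rho[of \<delta>] \<open>0 < r\<close> del unfolding r_def by simp
  moreover have "x0 \<in> D" "x0 \<notin> B i" "y \<notin> B i"
    using x0_in y_in \<open>0 < r\<close> i unfolding calD_def r_def[symmetric] by (force dest: bspec)+
  moreover have "dist x0 y < r" using close \<open>0 < r\<close> by (simp add: dist_norm)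
  ultimately have away: "\<And>j. j \<le> m \<Longrightarrow> j \<noteq> i \<Longrightarrow> cball x0 r \<inter> B j = {}"
    using cball_disjoint_other_barriers[where B = B and i = i,
        OF _ _ closed_B B_disj i(2) _ _ _ diff_sides] by blast
  have "LS_integral F f 0 = 0" for F and f :: "real \<Rightarrow> complex" by (rule LS_integral_eq_0) simp
  then have "X 0 = x0" using SDE[of 0] W0 by simp
  show "X t \<in> ball x0 r"
  proof (rule continuous_path_stays_in_ball)
    fix \<tau> assume \<tau>: "0 < \<tau>" "\<tau> \<le> t" "X ` {0..\<tau>} \<subseteq> cball x0 r"
    have "norm (X \<tau> - x0 - W \<tau>) \<le> L i \<tau> - L i 0"
      using norm_reflection_term_le[where B = B and L = L and s = s and X = X and V = "cball x0 r"
          and \<tau> = \<tau>, OF i(2) less_imp_le[OF \<tau>(1)] B_smooth L_cont[OF i(2)] L_mono[OF i(2)] _ _ away]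
        i(2) \<tau> s_vals[OF i(2)] L_nonneg[OF i(2)]
      by (simp add: SDE[OF less_imp_le[OF \<tau>(1)]] image_subset_iff)
    moreover have "L i \<tau> \<le> L i t" using mono_onD[OF L_mono[OF i(2)]] \<tau> by auto
    moreover have "norm (W \<tau>) \<le> \<gamma> * r + norm (y - x0)"
      using \<tau> t \<open>0 < r\<close> by (intro norm_le_of_close_to_segment[OF A3[of \<tau>]]) (auto simp: field_simps)
    ultimately have "norm (X \<tau> - x0) < r"
      using close t L0[OF i(2)] norm_triangle_ineq[of "X \<tau> - x0 - W \<tau>" "W \<tau>"]
      by (simp add: norm_minus_commute algebra_simps)
    then show "X \<tau> \<in> ball x0 r" by (simp add: dist_norm norm_minus_commute)
  qed (use X_cont t \<open>X 0 = x0\<close> \<open>0 < r\<close> in \<open>auto intro: continuous_on_subset\<close>)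
qed

end
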